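(* Let $n\ge 1$ and consider the Zeckendorf game on $n$ starting from the state $\{F_1^n\}$. Every game path that follows the Split-First Strategy has the maximum possible length among all game paths from $\{F_1^n\}$. (More generally, starting from any game state, every game path following the Split-First Strategy has maximal length among all game paths starting from that state.)
   Context: Fibonacci numbers are indexed by $F_1=1$, $F_2=2$, $F_{i+1}=F_i+F_{i-1}$. A game state is a finite multiset of Fibonacci numbers (tracked by index); $\{F_1^n\}$ denotes $n$ copies of $F_1$. The legal moves are: $C_1$: replace $F_1,F_1$ by $F_2$; for $i\ge 2$, $C_i$: replace $F_{i-1},F_i$ by $F_{i+1}$ (a "combining move"); $S_2$: replace $F_2,F_2$ by $F_1,F_3$; for $i\ge 3$, $S_i$: replace $F_i,F_i$ by $F_{i-2},F_{i+1}$ (a "splitting move"). Here $C_1$ ("combine 1") is grouped with the splitting moves, and "combining move" means $C_i$ with $i\ge 2$. The game on $n$ starts at $\{F_1^n\}$; the total sum $n$ is invariant, no legal move exists exactly at the Zeckendorf decomposition of $n$ (the unique representation of $n$ as a sum of $F_i$'s with distinct, pairwise non-consecutive indices), and every sequence of legal moves is finite. A game path from a state $G$ is a sequence of legal moves starting at $G$ and continuing until no legal move is available; its length is its number of moves. A game path follows the Split-First Strategy if at each state along it: whenever some splitting move or $C_1$ is available, the move taken is one of those (any choice); otherwise the move taken is the combining move $C_i$ ($i\ge 2$) with the smallest index $i$ among those available. *)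

theory Defs
  imports Main "HOL-Library.Multiset"
begin

text \<open>A game state is a finite multiset of Fibonacci indices (index i stands for F_i,
  with F_1 = 1, F_2 = 2, F_(i+1) = F_i + F_(i-1)); all indices are at least 1.\<close>

type_synonym zstate = "nat multiset"

datatype zmove = Comb nat | Spl nat

fun legal :: "zmove \<Rightarrow> zstate \<Rightarrow> bool" where
  "legal (Comb i) G =
     (if i = 1 then count G 1 \<ge> 2
      else if i \<ge> 2 then (i - 1) \<in># G \<and> i \<in># G
      else False)"
| "legal (Spl i) G = (i \<ge> 2 \<and> count G i \<ge> 2)"

fun apply_move :: "zmove \<Rightarrow> zstate \<Rightarrow> zstate" where
  "apply_move (Comb i) G =
     (if i = 1 then G - {#1, 1#} + {#2#}
      else G - {#i - 1, i#} + {#i + 1#})"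
| "apply_move (Spl i) G =
     (if i = 2 then G - {#2, 2#} + {#1, 3#}
      else G - {#i, i#} + {#i - 2, i + 1#})"

fun split_class :: "zmove \<Rightarrow> bool" where
  "split_class (Comb i) = (i = 1)"
| "split_class (Spl i) = True"

definition terminal :: "zstate \<Rightarrow> bool" where
  "terminal G \<longleftrightarrow> (\<forall>m. \<not> legal m G)"

fun legal_seq :: "zmove list \<Rightarrow> zstate \<Rightarrow> bool" where
  "legal_seq [] G = True"
| "legal_seq (m # ms) G = (legal m G \<and> legal_seq ms (apply_move m G))"

fun final_state :: "zmove list \<Rightarrow> zstate \<Rightarrow> zstate" where
  "final_state [] G = G"
| "final_state (m # ms) G = final_state ms (apply_move m G)"

definition game_path :: "zstate \<Rightarrow> zmove list \<Rightarrow> bool" where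
  "game_path G ms \<longleftrightarrow> legal_seq ms G \<and> terminal (final_state ms G)"

definition split_first_move :: "zstate \<Rightarrow> zmove \<Rightarrow> bool" where
  "split_first_move G m \<longleftrightarrow>
     (if \<exists>m'. legal m' G \<and> split_class m'
      then legal m G \<and> split_class m
      else (\<exists>i\<ge>2. m = Comb i \<and> legal (Comb i) G \<and>
                   (\<forall>j\<ge>2. legal (Comb j) G \<longrightarrow> i \<le> j)))"

fun split_first_seq :: "zstate \<Rightarrow> zmove list \<Rightarrow> bool" where
  "split_first_seq G [] = True"
| "split_first_seq G (m # ms) = (split_first_move G m \<and> split_first_seq (apply_move m G) ms)"

definition split_first_path :: "zstate \<Rightarrow> zmove list \<Rightarrow> bool" where
  "split_first_path G ms \<longleftrightarrow> game_path G ms \<and> split_first_seq G ms"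

end

theory Submission
  imports Defs
begin

text \<open>Every move decreases the state in a well-founded order, so by induction it suffices to show:
  if \<open>m\<close> is a Split-First move at \<open>G\<close> and \<open>m'\<close> is any legal move, then the Split-First game
  after \<open>m'\<close> is no longer than the one after \<open>m\<close> (both being longest games by induction).
  This is an exchange argument. Either \<open>m\<close> and \<open>m'\<close> commute, so that some game after \<open>m'\<close>
  starts with \<open>m\<close>; or a short sequence of moves after \<open>m\<close> reaches the state after \<open>m'\<close>
  (for instance \<open>S\<^sub>k\<close> followed by \<open>C\<^sub>k\<^sub>-\<^sub>1\<close> has the effect of \<open>C\<^sub>k\<close>). If no split is possible,
  every index occurs at most once, and the least combining move \<open>C\<^sub>i\<close> is compared with a
  combining move \<open>C\<^sub>j\<close>, \<open>j \<ge> i + 2\<close>, by a downward induction on \<open>j\<close>.\<close>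

fun consumed :: "zmove \<Rightarrow> nat multiset" where
  "consumed (Comb i) = (if i = 1 then {#1, 1#} else {#i - 1, i#})"
| "consumed (Spl i) = {#i, i#}"

fun produced :: "zmove \<Rightarrow> nat multiset" where
  "produced (Comb i) = (if i = 1 then {#2#} else {#i + 1#})"
| "produced (Spl i) = (if i = 2 then {#1, 3#} else {#i - 2, i + 1#})"

lemma apply_move_eq: "apply_move m G = G - consumed m + produced m"
  by (cases m) auto

lemma count_apply_move:
  "count (apply_move m G) x = count G x - count (consumed m) x + count (produced m) x"
  by (simp add: apply_move_eq)

lemma legal_consumed_subset: "legal m G \<Longrightarrow> consumed m \<subseteq># G"
  by (cases m) (auto simp: subseteq_mset_def split: if_splits)

lemma legal_Comb_ge2: "legal (Comb j) G \<Longrightarrow> j \<noteq> 1 \<Longrightarrow> 2 \<le> j"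
  by (cases "j = 0") auto

lemma commute_moves:
  assumes "legal a G" "legal b G" "legal b (apply_move a G)" "legal a (apply_move b G)"
  shows "apply_move b (apply_move a G) = apply_move a (apply_move b G)"
proof (rule multiset_eqI)
  fix x
  have "count (consumed a) x \<le> count G x" "count (consumed b) x \<le> count G x"
    "count (consumed b) x \<le> count (apply_move a G) x"
    "count (consumed a) x \<le> count (apply_move b G) x"
    using assms legal_consumed_subset by (blast intro: mset_subset_eq_count)+
  then show "count (apply_move b (apply_move a G)) x = count (apply_move a (apply_move b G)) x"
    unfolding count_apply_move by linarith
qed

lemmas move_count_simps = count_apply_move count_greater_zero_iff[symmetric]

lemma legal_Comb_after_distant_Comb:
  assumes "2 \<le> i" "2 \<le> j" "i + 1 < j \<or> j + 1 < i" "legal (Comb i) G"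
  shows "legal (Comb i) (apply_move (Comb j) G)"
  using assms by (auto simp: move_count_simps simp del: count_greater_zero_iff)

lemma Spl_after_Comb:
  assumes "2 \<le> j" "legal (Comb j) G" "j + 1 \<in># G"
  shows "legal (Spl (j + 1)) (apply_move (Comb j) G)"
    and "apply_move (Spl (j + 1)) (apply_move (Comb j) G) = apply_move (Comb (j + 1)) G"
  using assms by (auto simp: move_count_simps multiset_eq_iff simp del: count_greater_zero_iff)

definition game_order :: "(zstate \<times> zstate) set" where
  "game_order = inv_image (less_than <*lex*> less_than)
     (\<lambda>G. (size G, 3 * sum_mset G + count G 2))"

lemma wf_game_order: "wf game_order"
  unfolding game_order_def by (intro wf_inv_image wf_lex_prod wf_less_than)

lemma trans_game_order: "trans game_order"
  unfolding game_order_def by (intro trans_inv_image trans_lex_prod trans_less_than)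

text \<open>Combining moves shrink the state; a split \<open>S\<^sub>i\<close> keeps its size and lowers the index sum
  by one (\<open>i \<ge> 3\<close>), or keeps the sum and removes two copies of \<open>F\<^sub>2\<close> (\<open>i = 2\<close>).\<close>
lemma legal_move_game_order:
  assumes "legal m G"
  shows "(apply_move m G, G) \<in> game_order"
proof -
  define R where "R = G - consumed m"
  have G: "G = R + consumed m"
    unfolding R_def using legal_consumed_subset[OF assms] by simp
  have "apply_move m G = R + produced m"
    unfolding R_def by (simp add: apply_move_eq)
  moreover have "(R + produced m, R + consumed m) \<in> game_order"
    using assms G by (cases m) (auto simp: game_order_def)
  ultimately show ?thesis using G by simp
qed

lemma legal_seq_append:
  "legal_seq (xs @ ys) G \<longleftrightarrow> legal_seq xs G \<and> legal_seq ys (final_state xs G)"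
  by (induction xs arbitrary: G) auto

lemma final_state_append: "final_state (xs @ ys) G = final_state ys (final_state xs G)"
  by (induction xs arbitrary: G) auto

lemma split_first_move_legal: "split_first_move G m \<Longrightarrow> legal m G"
  unfolding split_first_move_def by (auto split: if_splits)

lemma split_first_moveI: "legal m G \<Longrightarrow> split_class m \<Longrightarrow> split_first_move G m"
  unfolding split_first_move_def by auto

lemma split_available_iff:
  "(\<exists>m. legal m G \<and> split_class m) \<longleftrightarrow> (\<exists>c\<ge>1. 2 \<le> count G c)"
proof
  assume "\<exists>m. legal m G \<and> split_class m"
  then obtain m where m: "legal m G" "split_class m" by blast
  show "\<exists>c\<ge>1. 2 \<le> count G c"
  proof (cases m)
    case (Comb i)
    with m show ?thesis by (auto intro!: exI[of _ 1])
  next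
    case (Spl c)
    with m show ?thesis by (auto intro!: exI[of _ c])
  qed
next
  assume "\<exists>c\<ge>1. 2 \<le> count G c"
  then obtain c where "1 \<le> c" "2 \<le> count G c" by blast
  then have "legal (if c = 1 then Comb 1 else Spl c) G \<and> split_class (if c = 1 then Comb 1 else Spl c)"
    by auto
  then show "\<exists>m. legal m G \<and> split_class m" by blast
qed

lemma split_first_move_exists:
  assumes "\<not> terminal G"
  shows "\<exists>m. split_first_move G m"
proof (cases "\<exists>m. legal m G \<and> split_class m")
  case True
  then show ?thesis using split_first_moveI by blast
next
  case no_split: False
  obtain m where m: "legal m G" using assms unfolding terminal_def by auto
  have "\<not> split_class m" using m no_split by blast
  with m obtain i where i: "legal (Comb i) G" "2 \<le> i"
    by (cases m) (auto split: if_splits)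
  define i0 where "i0 = (LEAST k. 2 \<le> k \<and> legal (Comb k) G)"
  have "2 \<le> i0 \<and> legal (Comb i0) G"
    unfolding i0_def by (rule LeastI[of _ i]) (use i in auto)
  moreover have "\<forall>j\<ge>2. legal (Comb j) G \<longrightarrow> i0 \<le> j"
    unfolding i0_def by (auto intro: Least_le)
  ultimately have "split_first_move G (Comb i0)"
    unfolding split_first_move_def using no_split by auto
  then show ?thesis by blast
qed

lemma least_Comb_after_far_Comb:
  assumes single: "\<forall>k\<ge>1. count G k \<le> 1"
    and i2: "2 \<le> i" and li: "legal (Comb i) G"
    and least: "\<forall>k. 2 \<le> k \<longrightarrow> k < i \<longrightarrow> \<not> legal (Comb k) G"
    and far: "i + 2 \<le> j" and lj: "legal (Comb j) G" and no_next: "j + 1 \<notin># G"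
  shows "split_first_move (apply_move (Comb j) G) (Comb i)"
proof -
  define X where "X = apply_move (Comb j) G"
  have cX: "count X y = count G y - (if y = j - 1 then 1 else 0) - (if y = j then 1 else 0)
      + (if y = j + 1 then 1 else 0)" for y
    unfolding X_def count_apply_move using far i2 by auto
  have "count X c \<le> 1" if "1 \<le> c" for c
    using single[rule_format, OF that] no_next cX[of c] by (cases "c = j + 1") (auto simp: not_in_iff)
  then have no_split: "\<not> (\<exists>m. legal m X \<and> split_class m)"
    unfolding split_available_iff by fastforce
  have "i \<le> k" if k2: "2 \<le> k" and lk: "legal (Comb k) X" for k
  proof (rule ccontr)
    assume "\<not> i \<le> k"
    then have "count X (k - 1) = count G (k - 1)" "count X k = count G k"
      using cX[of "k - 1"] cX[of k] far by auto
    then have "legal (Comb k) G"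
      using lk k2 by (simp flip: count_greater_zero_iff)
    with least k2 \<open>\<not> i \<le> k\<close> show False by (meson not_le)
  qed
  moreover have "legal (Comb i) X"
    unfolding X_def using i2 far li by (intro legal_Comb_after_distant_Comb) auto
  ultimately show ?thesis
    unfolding split_first_move_def X_def[symmetric] using no_split i2 by auto
qed

lemma split_first_path_exists: "\<exists>ms. split_first_path G ms"
proof (induction G rule: wf_induct[OF wf_game_order])
  case (1 G)
  show ?case
  proof (cases "terminal G")
    case True
    then have "split_first_path G []" by (simp add: split_first_path_def game_path_def)
    then show ?thesis by blast
  next
    case False
    then obtain m where m: "split_first_move G m" using split_first_move_exists by blast
    then have "legal m G" by (rule split_first_move_legal)
    then obtain ms where "split_first_path (apply_move m G) ms"
      using 1 legal_move_game_order by blast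
    then have "split_first_path G (m # ms)"
      using m \<open>legal m G\<close> by (simp add: split_first_path_def game_path_def)
    then show ?thesis by blast
  qed
qed

definition sf_length :: "zstate \<Rightarrow> nat" where
  "sf_length G = length (SOME ms. split_first_path G ms)"

definition split_first_optimal :: "zstate \<Rightarrow> bool" where
  "split_first_optimal G \<longleftrightarrow>
     (\<forall>ms ms'. split_first_path G ms \<longrightarrow> game_path G ms' \<longrightarrow> length ms' \<le> length ms)"

lemma split_first_path_some: "split_first_path G (SOME ms. split_first_path G ms)"
  using split_first_path_exists by (rule someI_ex)

lemma game_path_length_le_sf_length:
  "split_first_optimal G \<Longrightarrow> game_path G ms \<Longrightarrow> length ms \<le> sf_length G"
  unfolding split_first_optimal_def sf_length_def using split_first_path_some by blast

lemma split_first_path_length: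
  assumes "split_first_optimal G" "split_first_path G ms"
  shows "length ms = sf_length G"
proof (rule antisym)
  show "length ms \<le> sf_length G"
    using assms by (auto simp: split_first_path_def intro: game_path_length_le_sf_length)
  show "sf_length G \<le> length ms"
    using assms split_first_path_some[of G]
    unfolding split_first_optimal_def sf_length_def split_first_path_def by blast
qed

lemma legal_seq_sf_length_le:
  assumes "split_first_optimal G" "legal_seq ms G"
  shows "length ms + sf_length (final_state ms G) \<le> sf_length G"
proof -
  let ?ps = "SOME ps. split_first_path (final_state ms G) ps"
  have "game_path G (ms @ ?ps)"
    using assms(2) split_first_path_some[of "final_state ms G"]
    by (simp add: game_path_def split_first_path_def legal_seq_append final_state_append)
  then have "length (ms @ ?ps) \<le> sf_length G"
    by (rule game_path_length_le_sf_length[OF assms(1)])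
  then show ?thesis by (simp add: sf_length_def)
qed

lemma legal_move_sf_length_less:
  "split_first_optimal G \<Longrightarrow> legal m G \<Longrightarrow> sf_length (apply_move m G) < sf_length G"
  using legal_seq_sf_length_le[of G "[m]"] by simp

lemma split_first_move_sf_length:
  assumes "split_first_optimal G" "split_first_move G m"
  shows "sf_length G = Suc (sf_length (apply_move m G))"
proof -
  let ?ps = "SOME ps. split_first_path (apply_move m G) ps"
  have "split_first_path G (m # ?ps)"
    using split_first_path_some[of "apply_move m G"] assms(2) split_first_move_legal[OF assms(2)]
    by (simp add: game_path_def split_first_path_def)
  then have "length (m # ?ps) = sf_length G"
    by (rule split_first_path_length[OF assms(1)])
  then show ?thesis by (simp add: sf_length_def)
qed

context
  fixes G :: zstate
  assumes optimal_below: "\<And>X. (X, G) \<in> game_order \<Longrightarrow> split_first_optimal X"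
begin

lemma optimal_after_move: "legal m G \<Longrightarrow> split_first_optimal (apply_move m G)"
  using optimal_below legal_move_game_order by blast

lemma sf_length_le_if_reaches:
  assumes "legal m G" "legal_seq ms (apply_move m G)"
    and "final_state ms (apply_move m G) = apply_move m' G"
  shows "sf_length (apply_move m' G) \<le> sf_length (apply_move m G)"
  using legal_seq_sf_length_le[OF optimal_after_move[OF assms(1)] assms(2)] assms(3) by simp

lemma sf_length_le_if_commute:
  assumes lm: "legal m G" and lm': "legal m' G" and split: "split_class m"
    and lm_after: "legal m (apply_move m' G)" and lm'_after: "legal m' (apply_move m G)"
  shows "sf_length (apply_move m' G) \<le> sf_length (apply_move m G)"
proof -
  have "sf_length (apply_move m' G) = Suc (sf_length (apply_move m (apply_move m' G)))"
    using split_first_move_sf_length[OF optimal_after_move[OF lm'] split_first_moveI[OF lm_after split]] .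
  also have "apply_move m (apply_move m' G) = apply_move m' (apply_move m G)"
    using commute_moves[OF lm lm' lm'_after lm_after] by simp
  also have "Suc (sf_length \<dots>) \<le> sf_length (apply_move m G)"
    using legal_move_sf_length_less[OF optimal_after_move[OF lm] lm'_after] by simp
  finally show ?thesis .
qed

lemma Comb_one_dominates:
  assumes lm: "legal (Comb 1) G" and lm': "legal m' G"
  shows "sf_length (apply_move m' G) \<le> sf_length (apply_move (Comb 1) G)"
proof (cases m')
  case (Comb j)
  have "2 \<le> j" if "j \<noteq> 1" using legal_Comb_ge2 lm' Comb that by blast
  then consider "j = 1" | (C2) "j = 2" | (far) "3 \<le> j" by linarith
  then show ?thesis
  proof cases
    case C2
    have "legal_seq [Spl 2] (apply_move (Comb 1) G)"
      "final_state [Spl 2] (apply_move (Comb 1) G) = apply_move m' G"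
      using lm lm' unfolding Comb C2
      by (auto simp: move_count_simps multiset_eq_iff numeral_eq_Suc simp del: count_greater_zero_iff)
    then show ?thesis by (rule sf_length_le_if_reaches[OF lm])
  next
    case far
    then show ?thesis
      using lm lm' unfolding Comb
      by (intro sf_length_le_if_commute) (auto simp: move_count_simps numeral_eq_Suc simp del: count_greater_zero_iff)
  qed (use Comb in simp)
next
  case (Spl c)
  then show ?thesis
    using lm lm'
    by (intro sf_length_le_if_commute) (auto simp: move_count_simps numeral_eq_Suc simp del: count_greater_zero_iff)
qed

lemma Spl_dominates:
  assumes lm: "legal (Spl k) G" and lm': "legal m' G"
  shows "sf_length (apply_move m' G) \<le> sf_length (apply_move (Spl k) G)"
proof (cases m')
  case (Comb j)
  have "2 \<le> j" if "j \<noteq> 1" using legal_Comb_ge2 lm' Comb that by blast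
  then consider (C1) "j = 1" | (adjacent) "j = k + 1" | (same) "j = k"
    | (apart) "2 \<le> j" "j \<noteq> k" "j \<noteq> k + 1"
    by blast
  then show ?thesis
  proof cases
    case adjacent
    have "legal_seq [Spl (k + 1), Comb (k - 1)] (apply_move (Spl k) G)"
      "final_state [Spl (k + 1), Comb (k - 1)] (apply_move (Spl k) G) = apply_move m' G"
      using lm lm' unfolding Comb adjacent
      by (auto simp: move_count_simps multiset_eq_iff numeral_eq_Suc simp del: count_greater_zero_iff)
    then show ?thesis by (rule sf_length_le_if_reaches[OF lm])
  next
    case same
    have "legal_seq [Comb (k - 1)] (apply_move (Spl k) G)"
      "final_state [Comb (k - 1)] (apply_move (Spl k) G) = apply_move m' G"
      using lm lm' unfolding Comb same
      by (auto simp: move_count_simps multiset_eq_iff numeral_eq_Suc simp del: count_greater_zero_iff)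
    then show ?thesis by (rule sf_length_le_if_reaches[OF lm])
  next
    case C1
    then show ?thesis
      using lm lm' unfolding Comb
      by (intro sf_length_le_if_commute) (auto simp: move_count_simps numeral_eq_Suc simp del: count_greater_zero_iff)
  next
    case apart
    then show ?thesis
      using lm lm' unfolding Comb
      by (intro sf_length_le_if_commute) (auto simp: move_count_simps numeral_eq_Suc simp del: count_greater_zero_iff)
  qed
next
  case (Spl c)
  show ?thesis
  proof (cases "c = k")
    case False
    then show ?thesis
      using lm lm' unfolding Spl
      by (intro sf_length_le_if_commute) (auto simp: move_count_simps numeral_eq_Suc simp del: count_greater_zero_iff)
  qed (use Spl in simp)
qed

lemma split_class_move_dominates:
  assumes "legal m G" "split_class m" "legal m' G"
  shows "sf_length (apply_move m' G) \<le> sf_length (apply_move m G)"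
  using assms Comb_one_dominates Spl_dominates by (cases m) auto

text \<open>If \<open>F\<^sub>j\<^sub>+\<^sub>1\<close> is present, the Split-First reply to \<open>C\<^sub>j\<close> is \<open>S\<^sub>j\<^sub>+\<^sub>1\<close>, which leads to the state
  after \<open>C\<^sub>j\<^sub>+\<^sub>1\<close>; this gives an induction on \<open>j\<close> downwards. Otherwise \<open>C\<^sub>i\<close> is the
  Split-First reply.\<close>
lemma far_combine_bound:
  assumes single: "\<forall>k\<ge>1. count G k \<le> 1"
    and i2: "2 \<le> i" and li: "legal (Comb i) G"
    and least: "\<forall>k. 2 \<le> k \<longrightarrow> k < i \<longrightarrow> \<not> legal (Comb k) G"
  shows "i + 2 \<le> j \<Longrightarrow> legal (Comb j) G \<Longrightarrow>
    sf_length (apply_move (Comb j) G) \<le> Suc (sf_length (apply_move (Comb i) (apply_move (Comb j) G)))"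
proof (induction "Max (set_mset G) - j" arbitrary: j rule: less_induct)
  case (less j)
  then have far: "i + 2 \<le> j" and lj: "legal (Comb j) G" by auto
  let ?X = "apply_move (Comb j) G"
  have optX: "split_first_optimal ?X" by (rule optimal_after_move[OF lj])
  show ?case
  proof (cases "j + 1 \<in># G")
    case True
    have j2: "2 \<le> j" using far i2 by simp
    note lsX = Spl_after_Comb(1)[OF j2 lj True] and S_eq_C = Spl_after_Comb(2)[OF j2 lj True]
    have lj1: "legal (Comb (j + 1)) G" using lj True j2 by simp
    have "j + 1 \<le> Max (set_mset G)" using True by simp
    then have closer: "Max (set_mset G) - (j + 1) < Max (set_mset G) - j" by arith
    have IH: "sf_length (apply_move (Comb (j + 1)) G)
        \<le> Suc (sf_length (apply_move (Comb i) (apply_move (Comb (j + 1)) G)))"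
      using lj1 far by (intro less.hyps[OF closer]) auto
    have liX: "legal (Comb i) ?X" using i2 far li by (intro legal_Comb_after_distant_Comb) auto
    define Y where "Y = apply_move (Comb i) ?X"
    have optY: "split_first_optimal Y"
      using optimal_below trans_game_order legal_move_game_order[OF liX] legal_move_game_order[OF lj]
      unfolding Y_def by (meson transD)
    have lsY: "legal (Spl (j + 1)) Y"
      using lsX far i2 by (auto simp: Y_def count_apply_move)
    have liS: "legal (Comb i) (apply_move (Spl (j + 1)) ?X)"
      unfolding S_eq_C using i2 far li by (intro legal_Comb_after_distant_Comb) auto
    have S_after_C: "apply_move (Spl (j + 1)) Y = apply_move (Comb i) (apply_move (Comb (j + 1)) G)"
      using commute_moves[OF liX lsX lsY[unfolded Y_def] liS] unfolding Y_def S_eq_C .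
    have "sf_length ?X = Suc (sf_length (apply_move (Comb (j + 1)) G))"
      using split_first_move_sf_length[OF optX split_first_moveI[OF lsX]] S_eq_C by simp
    also have "\<dots> \<le> Suc (Suc (sf_length (apply_move (Spl (j + 1)) Y)))"
      unfolding S_after_C using IH by simp
    also have "\<dots> \<le> Suc (sf_length Y)"
      using legal_move_sf_length_less[OF optY lsY] by simp
    finally show ?thesis unfolding Y_def .
  next
    case False
    show ?thesis
      using split_first_move_sf_length[OF optX least_Comb_after_far_Comb[OF single i2 li least far lj False]]
      by simp
  qed
qed

lemma least_combine_dominates:
  assumes no_split: "\<not> (\<exists>m. legal m G \<and> split_class m)"
    and i2: "2 \<le> i" and li: "legal (Comb i) G"
    and least: "\<forall>j\<ge>2. legal (Comb j) G \<longrightarrow> i \<le> j"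
    and lm': "legal m' G"
  shows "sf_length (apply_move m' G) \<le> sf_length (apply_move (Comb i) G)"
proof -
  have single: "\<forall>k\<ge>1. count G k \<le> 1"
    using no_split unfolding split_available_iff by auto
  have "\<not> split_class m'" using no_split lm' by blast
  then obtain j where m': "m' = Comb j" and "j \<noteq> 1" by (cases m') auto
  have lj: "legal (Comb j) G" using lm' unfolding m' .
  have j2: "2 \<le> j" using legal_Comb_ge2[OF lj \<open>j \<noteq> 1\<close>] .
  have "i \<le> j" using least j2 lj by blast
  have optA: "split_first_optimal (apply_move (Comb i) G)" by (rule optimal_after_move[OF li])
  consider (same) "j = i" | (adjacent) "j = i + 1" | (far) "i + 2 \<le> j" using \<open>i \<le> j\<close> by linarith
  then show ?thesis
  proof cases
    case same
    then show ?thesis using m' by simp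
  next
    case adjacent
    have "i + 1 \<in># G" using lj i2 unfolding adjacent by simp
    then have "legal_seq [Spl (i + 1)] (apply_move (Comb i) G)"
      "final_state [Spl (i + 1)] (apply_move (Comb i) G) = apply_move m' G"
      using Spl_after_Comb[OF i2 li] unfolding m' adjacent by simp_all
    then show ?thesis by (rule sf_length_le_if_reaches[OF li])
  next
    case far
    have ljA: "legal (Comb j) (apply_move (Comb i) G)"
      using lj far i2 by (intro legal_Comb_after_distant_Comb) auto
    have liB: "legal (Comb i) (apply_move (Comb j) G)"
      using li far i2 by (intro legal_Comb_after_distant_Comb) auto
    have "sf_length (apply_move (Comb j) G)
        \<le> Suc (sf_length (apply_move (Comb i) (apply_move (Comb j) G)))"
      by (rule far_combine_bound[OF single i2 li _ far lj]) (use least in auto)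
    also have "apply_move (Comb i) (apply_move (Comb j) G) = apply_move (Comb j) (apply_move (Comb i) G)"
      by (rule commute_moves[OF lj li liB ljA])
    also have "Suc (sf_length \<dots>) \<le> sf_length (apply_move (Comb i) G)"
      using legal_move_sf_length_less[OF optA ljA] by simp
    finally show ?thesis using m' by simp
  qed
qed

lemma split_first_move_dominates:
  assumes "split_first_move G m" "legal m' G"
  shows "sf_length (apply_move m' G) \<le> sf_length (apply_move m G)"
proof (cases "\<exists>m. legal m G \<and> split_class m")
  case True
  with assms(1) have "legal m G" "split_class m" unfolding split_first_move_def by auto
  then show ?thesis using split_class_move_dominates assms(2) by blast
next
  case False
  with assms(1) obtain i where "m = Comb i" "2 \<le> i" "legal (Comb i) G"
    "\<forall>j\<ge>2. legal (Comb j) G \<longrightarrow> i \<le> j"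
    unfolding split_first_move_def by auto
  then show ?thesis using least_combine_dominates[OF False] assms(2) by blast
qed

end

lemma split_first_optimal_all: "split_first_optimal G"
proof (induction G rule: wf_induct[OF wf_game_order])
  case (1 G)
  show ?case unfolding split_first_optimal_def
  proof (intro allI impI)
    fix ms ms' assume sf: "split_first_path G ms" and gp: "game_path G ms'"
    show "length ms' \<le> length ms"
    proof (cases ms')
      case (Cons m' ms'')
      then have lm': "legal m' G" and gp': "game_path (apply_move m' G) ms''"
        using gp by (simp_all add: game_path_def)
      then obtain m ms0 where ms: "ms = m # ms0"
        using sf by (cases ms) (auto simp: split_first_path_def game_path_def terminal_def)
      then have m: "split_first_move G m" and sf': "split_first_path (apply_move m G) ms0"
        using sf by (simp_all add: split_first_path_def game_path_def)
      have "length ms'' \<le> sf_length (apply_move m' G)"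
        using game_path_length_le_sf_length[OF _ gp'] 1 legal_move_game_order[OF lm'] by blast
      also have "\<dots> \<le> sf_length (apply_move m G)"
        using split_first_move_dominates[OF _ m lm'] 1 by blast
      also have "\<dots> = length ms0"
        using split_first_path_length[OF _ sf'] 1 legal_move_game_order split_first_move_legal[OF m]
        by metis
      finally show ?thesis using Cons ms by simp
    qed simp
  qed
qed

theorem theorem1p1:
  shows "(\<forall>n::nat. n \<ge> 1 \<longrightarrow>
            (\<forall>ms ms'. split_first_path (replicate_mset n 1) ms \<longrightarrow>
                      game_path (replicate_mset n 1) ms' \<longrightarrow> length ms' \<le> length ms))
       \<and> (\<forall>G::nat multiset. (\<forall>i\<in>#G. i \<ge> 1) \<longrightarrow>
            (\<forall>ms ms'. split_first_path G ms \<longrightarrow>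
                      game_path G ms' \<longrightarrow> length ms' \<le> length ms))"
  using split_first_optimal_all unfolding split_first_optimal_def by blast

end
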